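(* Let $B$ be a board with $c$ colors. If, in some row or column, there are fewer than $c-1$ blank (empty) cells between some sink and the boundary of the grid, then $B$ has no perfect layout.
   Context: A board is an $m\times n$ grid of unit cells in which exactly $c$ cells are sinks, one of each of $c$ colors, and all other cells are empty. A layout places, in some of the empty cells, arrows, each having one of the $c$ colors and one of the four cardinal directions. A packet of color $i$ may enter the grid through any unit edge of the outer boundary of the grid, into the adjacent cell, moving perpendicular to that edge into the grid; it moves one cell at a time in its current direction, and whenever it enters a cell containing an arrow of color $i$ its direction becomes that arrow's direction (arrows of other colors are ignored). The packet succeeds if it enters the sink of color $i$; it fails if it enters a sink of another color, leaves the grid, or travels forever without reaching a sink. A perfect layout is a layout in which every packet of every color entering through every boundary edge succeeds. *)

theory Defs
  imports Main
begin

(* Cells are pairs (row, column) of integers; the grid is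
   {0..<m} x {0..<n}.  Colors are the naturals 0..<c. *)
type_synonym cell = "int \<times> int"

datatype dir = North | South | West | East

fun delta :: "dir \<Rightarrow> int \<times> int" where
  "delta North = (-1, 0)"
| "delta South = (1, 0)"
| "delta West = (0, -1)"
| "delta East = (0, 1)"

definition in_grid :: "nat \<Rightarrow> nat \<Rightarrow> cell \<Rightarrow> bool" where
  "in_grid m n p \<longleftrightarrow> 0 \<le> fst p \<and> fst p < int m \<and> 0 \<le> snd p \<and> snd p < int n"

definition is_board :: "nat \<Rightarrow> nat \<Rightarrow> nat \<Rightarrow> (nat \<Rightarrow> cell) \<Rightarrow> bool" where
  "is_board m n c sink \<longleftrightarrow> inj_on sink {..<c} \<and> (\<forall>i<c. in_grid m n (sink i))"

definition is_sink :: "nat \<Rightarrow> (nat \<Rightarrow> cell) \<Rightarrow> cell \<Rightarrow> bool" where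
  "is_sink c sink p \<longleftrightarrow> (\<exists>i<c. sink i = p)"

type_synonym layout = "cell \<Rightarrow> (nat \<times> dir) option"

definition is_layout :: "nat \<Rightarrow> nat \<Rightarrow> nat \<Rightarrow> (nat \<Rightarrow> cell) \<Rightarrow> layout \<Rightarrow> bool" where
  "is_layout m n c sink A \<longleftrightarrow>
     (\<forall>p j d. A p = Some (j, d) \<longrightarrow> in_grid m n p \<and> \<not> is_sink c sink p \<and> j < c)"

definition turn :: "layout \<Rightarrow> nat \<Rightarrow> cell \<Rightarrow> dir \<Rightarrow> dir" where
  "turn A i p d = (case A p of Some (j, e) \<Rightarrow> if j = i then e else d | None \<Rightarrow> d)"

(* traj A i p0 d0 k = (cell entered at step k, direction after entering it);
   the packet enters cell p0 (adjacent to the boundary edge) moving in direction d0 *)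
fun traj :: "layout \<Rightarrow> nat \<Rightarrow> cell \<Rightarrow> dir \<Rightarrow> nat \<Rightarrow> cell \<times> dir" where
  "traj A i p0 d0 0 = (p0, turn A i p0 d0)"
| "traj A i p0 d0 (Suc k) =
     (let (p, d) = traj A i p0 d0 k;
          q = (fst p + fst (delta d), snd p + snd (delta d))
      in (q, turn A i q d))"

(* entries through unit edges of the outer boundary: (first cell, inward direction) *)
definition entries :: "nat \<Rightarrow> nat \<Rightarrow> (cell \<times> dir) set" where
  "entries m n =
     {((0, y), South) | y. 0 \<le> y \<and> y < int n}
   \<union> {((int m - 1, y), North) | y. 0 \<le> y \<and> y < int n}
   \<union> {((x, 0), East) | x. 0 \<le> x \<and> x < int m}
   \<union> {((x, int n - 1), West) | x. 0 \<le> x \<and> x < int m}"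

definition succeeds :: "nat \<Rightarrow> nat \<Rightarrow> nat \<Rightarrow> (nat \<Rightarrow> cell) \<Rightarrow> layout \<Rightarrow> nat \<Rightarrow> cell \<Rightarrow> dir \<Rightarrow> bool" where
  "succeeds m n c sink A i p0 d0 \<longleftrightarrow>
     (\<exists>k. fst (traj A i p0 d0 k) = sink i \<and>
        (\<forall>j<k. in_grid m n (fst (traj A i p0 d0 j)) \<and> \<not> is_sink c sink (fst (traj A i p0 d0 j))))"

definition perfect_layout :: "nat \<Rightarrow> nat \<Rightarrow> nat \<Rightarrow> (nat \<Rightarrow> cell) \<Rightarrow> layout \<Rightarrow> bool" where
  "perfect_layout m n c sink A \<longleftrightarrow> is_layout m n c sink A \<and>
     (\<forall>i<c. \<forall>(p0, d0) \<in> entries m n. succeeds m n c sink A i p0 d0)"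

definition sink_near_boundary :: "nat \<Rightarrow> nat \<Rightarrow> nat \<Rightarrow> (nat \<Rightarrow> cell) \<Rightarrow> bool" where
  "sink_near_boundary m n c sink \<longleftrightarrow> (\<exists>i<c.
     let (x, y) = sink i in
       card {x'. 0 \<le> x' \<and> x' < x \<and> \<not> is_sink c sink (x', y)} < c - 1
     \<or> card {x'. x < x' \<and> x' < int m \<and> \<not> is_sink c sink (x', y)} < c - 1
     \<or> card {y'. 0 \<le> y' \<and> y' < y \<and> \<not> is_sink c sink (x, y')} < c - 1
     \<or> card {y'. y < y' \<and> y' < int n \<and> \<not> is_sink c sink (x, y')} < c - 1)"

end

theory Submission
  imports Defs
begin

text \<open>Enter the grid through the boundary edge in line with a sink, heading towards it, and let
the first sink met on this ray have colour \<open>i\<^sub>0\<close>. A packet of any other colour \<open>j\<close> that is never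
turned before reaching that sink enters the wrong sink, so some cell strictly before it carries
an arrow of colour \<open>j\<close>. Cells carry at most one arrow, so at least \<open>c - 1\<close> blank cells precede
the first sink, and hence the given sink, on the ray.\<close>

definition ray :: "cell \<Rightarrow> dir \<Rightarrow> nat \<Rightarrow> cell" where
  "ray p d k = (fst p + int k * fst (delta d), snd p + int k * snd (delta d))"

lemma traj_along_ray:
  assumes "\<forall>k<N. turn A j (ray p d k) d = d" and "k \<le> N"
  shows "traj A j p d k = (ray p d k, turn A j (ray p d k) d)"
  using assms(2)
proof (induction k)
  case 0
  then show ?case by (simp add: ray_def)
next
  case (Suc k)
  then have "turn A j (ray p d k) d = d" using assms(1) by simp
  with Suc show ?case by (simp add: ray_def algebra_simps Let_def)
qed

lemma unturned_packet_not_succeeds: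
  assumes unturned: "\<forall>k<x0. turn A j (ray p d k) d = d"
    and blank: "\<forall>k<x0. \<not> is_sink c sink (ray p d k)"
    and first: "is_sink c sink (ray p d x0)"
    and wrong: "ray p d x0 \<noteq> sink j" and "j < c"
  shows "\<not> succeeds m n c sink A j p d"
proof
  assume "succeeds m n c sink A j p d"
  then obtain K where hit: "fst (traj A j p d K) = sink j"
    and before: "\<forall>l<K. \<not> is_sink c sink (fst (traj A j p d l))"
    by (auto simp: succeeds_def)
  have on_ray: "fst (traj A j p d k) = ray p d k" if "k \<le> x0" for k
    using traj_along_ray[OF unturned that] by simp
  consider "K < x0" | "K = x0" | "x0 < K" by linarith
  then show False
  proof cases
    case 1
    with hit on_ray[of K] \<open>j < c\<close> have "is_sink c sink (ray p d K)"
      by (auto simp: is_sink_def)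
    with blank 1 show False by blast
  next
    case 2
    with hit wrong on_ray show False by simp
  next
    case 3
    with before first on_ray show False by auto
  qed
qed

lemma perfect_layout_arrow_before_first_sink:
  assumes perf: "perfect_layout m n c sink A" and entry: "(p, d) \<in> entries m n"
    and inj: "inj_on sink {..<c}"
    and i0: "i0 < c" "sink i0 = ray p d x0"
    and blank: "\<forall>k<x0. \<not> is_sink c sink (ray p d k)"
    and j: "j < c" "j \<noteq> i0"
  shows "\<exists>k<x0. \<exists>e. A (ray p d k) = Some (j, e)"
proof (rule ccontr)
  assume "\<not> ?thesis"
  then have "\<forall>k<x0. turn A j (ray p d k) d = d"
    by (auto simp: turn_def split: option.splits)
  moreover have "ray p d x0 \<noteq> sink j"
    using inj i0 j by (metis inj_on_eq_iff lessThan_iff)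
  moreover have "is_sink c sink (ray p d x0)"
    using i0 by (auto simp: is_sink_def)
  ultimately have "\<not> succeeds m n c sink A j p d"
    using unturned_packet_not_succeeds blank j(1) by blast
  moreover have "succeeds m n c sink A j p d"
    using perf entry j(1) by (auto simp: perfect_layout_def)
  ultimately show False by contradiction
qed

lemma perfect_layout_first_sink_distance_ge:
  assumes perf: "perfect_layout m n c sink A" and entry: "(p, d) \<in> entries m n"
    and inj: "inj_on sink {..<c}"
    and i0: "i0 < c" "sink i0 = ray p d x0"
    and blank: "\<forall>k<x0. \<not> is_sink c sink (ray p d k)"
  shows "c - 1 \<le> x0"
proof -
  define colour where "colour k = fst (the (A (ray p d k)))" for k
  have "{..<c} - {i0} \<subseteq> colour ` {..<x0}"
  proof
    fix j assume "j \<in> {..<c} - {i0}"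
    then obtain k e where "k < x0" "A (ray p d k) = Some (j, e)"
      using perfect_layout_arrow_before_first_sink[OF perf entry inj i0 blank] by blast
    then show "j \<in> colour ` {..<x0}" unfolding colour_def by force
  qed
  then have "card ({..<c} - {i0}) \<le> card (colour ` {..<x0})"
    by (rule card_mono[rotated]) simp
  also have "\<dots> \<le> x0"
    using card_image_le[of "{..<x0}" colour] by simp
  finally show ?thesis
    using i0(1) by (simp add: card_Diff_singleton)
qed

lemma perfect_layout_blank_cells_on_ray_ge:
  assumes perf: "perfect_layout m n c sink A" and entry: "(p, d) \<in> entries m n"
    and inj: "inj_on sink {..<c}"
    and sink_on_ray: "is_sink c sink (ray p d K)"
    and "inj g" and "finite B"
    and into_B: "\<And>k. k < K \<Longrightarrow> \<not> is_sink c sink (ray p d k) \<Longrightarrow> g k \<in> B"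
  shows "c - 1 \<le> card B"
proof -
  define x0 where "x0 = (LEAST k. is_sink c sink (ray p d k))"
  have "is_sink c sink (ray p d x0)"
    unfolding x0_def using sink_on_ray by (rule LeastI)
  then obtain i0 where i0: "i0 < c" "sink i0 = ray p d x0"
    by (auto simp: is_sink_def)
  have blank: "\<forall>k<x0. \<not> is_sink c sink (ray p d k)"
    unfolding x0_def using not_less_Least by blast
  have "x0 \<le> K"
    unfolding x0_def using sink_on_ray by (rule Least_le)
  have "c - 1 \<le> card {..<x0}"
    using perfect_layout_first_sink_distance_ge[OF perf entry inj i0 blank] by simp
  also have "\<dots> \<le> card B"
  proof (rule card_inj_on_le)
    show "inj_on g {..<x0}" using \<open>inj g\<close> inj_on_subset by blast
    show "g ` {..<x0} \<subseteq> B" using blank \<open>x0 \<le> K\<close> into_B by auto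
  qed (fact \<open>finite B\<close>)
  finally show ?thesis .
qed

lemma perfect_layout_blank_cells_towards_boundary_ge:
  assumes perf: "perfect_layout m n c sink A" and board: "is_board m n c sink"
    and "i < c" and sxy: "sink i = (x, y)"
  shows "c - 1 \<le> card {x'. 0 \<le> x' \<and> x' < x \<and> \<not> is_sink c sink (x', y)}"
    and "c - 1 \<le> card {x'. x < x' \<and> x' < int m \<and> \<not> is_sink c sink (x', y)}"
    and "c - 1 \<le> card {y'. 0 \<le> y' \<and> y' < y \<and> \<not> is_sink c sink (x, y')}"
    and "c - 1 \<le> card {y'. y < y' \<and> y' < int n \<and> \<not> is_sink c sink (x, y')}"
proof -
  have inj: "inj_on sink {..<c}" using board by (simp add: is_board_def)
  have grid: "0 \<le> x" "x < int m" "0 \<le> y" "y < int n"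
    using board \<open>i < c\<close> sxy by (auto simp: is_board_def in_grid_def)
  have sink: "is_sink c sink (x, y)" using \<open>i < c\<close> sxy by (auto simp: is_sink_def)
  have inj_rev: "inj (\<lambda>k::nat. a - int k)" for a :: int by (simp add: inj_def)
  have finite_closed: "finite {z::int. a \<le> z \<and> z < b \<and> P z}" for a b P
    by (rule finite_subset[of _ "{a..<b}"]) auto
  have finite_open: "finite {z::int. a < z \<and> z < b \<and> P z}" for a b P
    by (rule finite_subset[of _ "{a..<b}"]) auto
  note bound = perfect_layout_blank_cells_on_ray_ge[OF perf _ inj]
  show "c - 1 \<le> card {x'. 0 \<le> x' \<and> x' < x \<and> \<not> is_sink c sink (x', y)}"
    by (rule bound[where p = "(0, y)" and d = South and K = "nat x" and g = int])
      (use grid sink finite_closed in \<open>auto simp: entries_def ray_def\<close>)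
  show "c - 1 \<le> card {x'. x < x' \<and> x' < int m \<and> \<not> is_sink c sink (x', y)}"
    by (rule bound[where p = "(int m - 1, y)" and d = North and K = "nat (int m - 1 - x)"
          and g = "\<lambda>k. int m - 1 - int k"])
      (use grid sink finite_open inj_rev in \<open>auto simp: entries_def ray_def\<close>)
  show "c - 1 \<le> card {y'. 0 \<le> y' \<and> y' < y \<and> \<not> is_sink c sink (x, y')}"
    by (rule bound[where p = "(x, 0)" and d = East and K = "nat y" and g = int])
      (use grid sink finite_closed in \<open>auto simp: entries_def ray_def\<close>)
  show "c - 1 \<le> card {y'. y < y' \<and> y' < int n \<and> \<not> is_sink c sink (x, y')}"
    by (rule bound[where p = "(x, int n - 1)" and d = West and K = "nat (int n - 1 - y)"
          and g = "\<lambda>k. int n - 1 - int k"])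
      (use grid sink finite_open inj_rev in \<open>auto simp: entries_def ray_def\<close>)
qed

theorem mainTheorem9:
  fixes m n c :: nat and sink :: "nat \<Rightarrow> cell"
  assumes "is_board m n c sink"
    and "sink_near_boundary m n c sink"
  shows "\<not> (\<exists>A. perfect_layout m n c sink A)"
proof
  assume "\<exists>A. perfect_layout m n c sink A"
  then obtain A where perf: "perfect_layout m n c sink A" by blast
  from assms(2) obtain i where "i < c" and near: "let (x, y) = sink i in
       card {x'. 0 \<le> x' \<and> x' < x \<and> \<not> is_sink c sink (x', y)} < c - 1
     \<or> card {x'. x < x' \<and> x' < int m \<and> \<not> is_sink c sink (x', y)} < c - 1
     \<or> card {y'. 0 \<le> y' \<and> y' < y \<and> \<not> is_sink c sink (x, y')} < c - 1
     \<or> card {y'. y < y' \<and> y' < int n \<and> \<not> is_sink c sink (x, y')} < c - 1"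
    unfolding sink_near_boundary_def by blast
  obtain x y where sxy: "sink i = (x, y)" by fastforce
  with near perfect_layout_blank_cells_towards_boundary_ge[OF perf assms(1) \<open>i < c\<close> sxy]
  show False by (simp add: not_less[symmetric])
qed

end
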